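(* Assume that the ALS parameter sequence $(\mathbf p_k)_{k\in\mathbb N}$ is bounded. If some accumulation point $\bar v$ of the sequence $(v_k)_{k\in\mathbb N}$ is isolated in the (nonempty) set of accumulation points of $(v_k)_{k\in\mathbb N}$, then $v_k\to\bar v$ as $k\to\infty$.
   Context: Let $d\ge 1$ and $m_1,\dots,m_d$ be positive integers, $N=\prod_{\nu=1}^d m_\nu$, and $\mathcal V=\bigotimes_{\nu=1}^d\mathbb R^{m_\nu}\cong\mathbb R^N$ with the Euclidean inner product. Let $A\in\mathbb R^{N\times N}$ be symmetric positive definite and $b\in\mathcal V\setminus\{0\}$; put $f(v)=\frac{1}{\|b\|^2}\big(\tfrac12\langle Av,v\rangle-\langle b,v\rangle\big)$. A tensor format representation consists of an integer $L\ge d$, finite-dimensional real inner product spaces $P_1,\dots,P_L$, the parameter space $P=P_1\times\dots\times P_L$ (with product norm), and a multilinear map $U:P\to\mathcal V$; put $F=f\circ U$. For $\mathbf p=(p_1,\dots,p_L)\in P$ and $\mu\in\{1,\dots,L\}$ let $W_{\mu,\mathbf p^{[\mu]}}:P_\mu\to\mathcal V$ be the linear map $q\mapsto U(p_1,\dots,p_{\mu-1},q,p_{\mu+1},\dots,p_L)$ (depending only on $\mathbf p^{[\mu]}=(p_1,\dots,p_{\mu-1},p_{\mu+1},\dots,p_L)$). Linear maps are identified with matrices w.r.t. orthonormal bases; $X^T$ is the transpose, $X^+$ the Moore–Penrose pseudoinverse. ALS: choose $\mathbf p_1=(p_1^1,\dots,p_L^1)\in P$. For $k=1,2,\dots$ and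 $\mu=1,\dots,L$ in this order let $W_{k,\mu}:=W_{\mu,(p_1^{k+1},\dots,p_{\mu-1}^{k+1},p_{\mu+1}^k,\dots,p_L^k)}$ and $p_\mu^{k+1}:=(W_{k,\mu}^TAW_{k,\mu})^+W_{k,\mu}^Tb$ (the minimum-norm minimiser of $q\mapsto F(p_1^{k+1},\dots,p_{\mu-1}^{k+1},q,p_{\mu+1}^k,\dots,p_L^k)$). Put $\mathbf p_k=(p_1^k,\dots,p_L^k)$ and $v_k=U(\mathbf p_k)$. *)

theory Defs
  imports Complex_Main "Jordan_Normal_Form.Matrix"
begin

text \<open>Vectors of R^k are represented as real vec of dimension k (Jordan_Normal_Form),
  matrices as real mat.  Linear maps are identified with matrices w.r.t. the standard
  (orthonormal) bases.\<close>

definition vnorm :: "real vec \<Rightarrow> real" where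
  "vnorm v = sqrt (v \<bullet> v)"

text \<open>Product norm on P = P_1 x ... x P_L (components indexed 0..L-1).\<close>
definition pnorm :: "nat \<Rightarrow> (nat \<Rightarrow> real vec) \<Rightarrow> real" where
  "pnorm L p = sqrt (\<Sum>\<mu><L. (vnorm (p \<mu>))\<^sup>2)"

definition pinv :: "real mat \<Rightarrow> real mat" where
  "pinv M = (THE X. X \<in> carrier_mat (dim_col M) (dim_row M) \<and>
                     M * X * M = M \<and> X * M * X = X \<and>
                     transpose_mat (M * X) = M * X \<and> transpose_mat (X * M) = X * M)"

text \<open>U : P_1 x ... x P_L -> R^N multilinear, P_mu = R^(n mu).
  Tuples are functions nat => real vec; only components mu < L matter.\<close>
definition multilinear_format ::
  "nat \<Rightarrow> (nat \<Rightarrow> nat) \<Rightarrow> nat \<Rightarrow> ((nat \<Rightarrow> real vec) \<Rightarrow> real vec) \<Rightarrow> bool" where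
  "multilinear_format L n N U \<longleftrightarrow>
     (\<forall>p. (\<forall>\<mu><L. p \<mu> \<in> carrier_vec (n \<mu>)) \<longrightarrow> U p \<in> carrier_vec N) \<and>
     (\<forall>p q. (\<forall>\<mu><L. p \<mu> = q \<mu>) \<longrightarrow> U p = U q) \<and>
     (\<forall>\<mu><L. \<forall>p. (\<forall>\<nu><L. p \<nu> \<in> carrier_vec (n \<nu>)) \<longrightarrow>
        (\<forall>x \<in> carrier_vec (n \<mu>). \<forall>y \<in> carrier_vec (n \<mu>). \<forall>a c :: real.
           U (p(\<mu> := a \<cdot>\<^sub>v x + c \<cdot>\<^sub>v y)) = a \<cdot>\<^sub>v U (p(\<mu> := x)) + c \<cdot>\<^sub>v U (p(\<mu> := y))))"

text \<open>Matrix (N x n mu) of the linear map W_{mu,p}: q \<mapsto> U(p_1,..,q,..,p_L).\<close>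
definition Wmat :: "nat \<Rightarrow> (nat \<Rightarrow> nat) \<Rightarrow> ((nat \<Rightarrow> real vec) \<Rightarrow> real vec)
                     \<Rightarrow> nat \<Rightarrow> (nat \<Rightarrow> real vec) \<Rightarrow> real mat" where
  "Wmat N n U \<mu> p = mat N (n \<mu>) (\<lambda>(j, i). U (p(\<mu> := unit_vec (n \<mu>) i)) $ j)"

definition vec_tendsto :: "(nat \<Rightarrow> real vec) \<Rightarrow> real vec \<Rightarrow> bool" where
  "vec_tendsto X l \<longleftrightarrow> (\<lambda>k. vnorm (X k - l)) \<longlonglongrightarrow> 0"

definition acc_points :: "nat \<Rightarrow> (nat \<Rightarrow> real vec) \<Rightarrow> real vec set" where
  "acc_points N X = {l \<in> carrier_vec N. \<exists>r. strict_mono r \<and> vec_tendsto (X \<circ> r) l}"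

end

theory Submission
  imports Defs "HOL-Analysis.L2_Norm" "Jordan_Normal_Form.Determinant" "HOL-Library.Infinite_Set"
begin

text \<open>Every block update of ALS minimises the strictly convex energy exactly on an affine slice, so it
  lowers the energy by half the squared \<open>A\<close>-norm of the change it causes in \<open>v\<close>. The energy is
  bounded below, so these decreases are summable and \<open>v\<^bsub>k+1\<^esub> - v\<^sub>k \<rightarrow> 0\<close>. A sequence with vanishing
  increments converges to any isolated accumulation point: otherwise it would cross a thin annulus
  around that point infinitely often and thus accumulate inside the annulus.\<close>

section \<open>The Euclidean norm on real vectors\<close>

lemma vnorm_eq_L2_set: "v \<in> carrier_vec N \<Longrightarrow> vnorm v = L2_set (\<lambda>i. v $ i) {..<N}"
  unfolding vnorm_def L2_set_def scalar_prod_def by (simp add: atLeast0LessThan power2_eq_square)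

lemma scalar_prod_self_nonneg: "0 \<le> (v :: real vec) \<bullet> v"
  using conjugate_square_ge_0_vec[of v] by simp

lemma scalar_prod_self_eq_0_iff:
  "(v :: real vec) \<in> carrier_vec N \<Longrightarrow> v \<bullet> v = 0 \<longleftrightarrow> v = 0\<^sub>v N"
  using conjugate_square_eq_0_vec[of v N] by simp

lemma vnorm_nonneg: "0 \<le> vnorm v"
  unfolding vnorm_def using scalar_prod_self_nonneg by simp

lemma vnorm_diff_self: "x \<in> carrier_vec N \<Longrightarrow> vnorm (x - x) = 0"
  unfolding vnorm_def scalar_prod_def by simp

lemma vnorm_add_le:
  assumes "x \<in> carrier_vec N" "y \<in> carrier_vec N"
  shows "vnorm (x + y) \<le> vnorm x + vnorm y"
proof -
  have "L2_set (\<lambda>i. (x + y) $ i) {..<N} = L2_set (\<lambda>i. x $ i + y $ i) {..<N}"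
    by (rule L2_set_cong) (use assms in auto)
  thus ?thesis using assms L2_set_triangle_ineq[of "\<lambda>i. x $ i" "\<lambda>i. y $ i" "{..<N}"]
    by (simp add: vnorm_eq_L2_set[of _ N])
qed

lemma vnorm_diff_triangle:
  assumes x: "x \<in> carrier_vec N" and y: "y \<in> carrier_vec N" and z: "z \<in> carrier_vec N"
  shows "vnorm (x - z) \<le> vnorm (x - y) + vnorm (y - z)"
proof -
  have "x - z = (x - y) + (y - z)" using x y z by (intro eq_vecI) auto
  thus ?thesis using vnorm_add_le[of "x - y" N "y - z"] x y z by simp
qed

lemma vnorm_minus_commute:
  assumes "x \<in> carrier_vec N" "y \<in> carrier_vec N"
  shows "vnorm (x - y) = vnorm (y - x)"
  using assms by (simp add: vnorm_eq_L2_set[of _ N] L2_set_def power2_commute)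

lemma abs_vnorm_diff_le:
  assumes a: "a \<in> carrier_vec N" and w: "w \<in> carrier_vec N" and z: "z \<in> carrier_vec N"
  shows "\<bar>vnorm (a - z) - vnorm (w - z)\<bar> \<le> vnorm (a - w)"
  using vnorm_diff_triangle[OF a w z] vnorm_diff_triangle[OF w a z] vnorm_minus_commute[OF a w]
  by linarith

lemma abs_index_le_vnorm:
  assumes "v \<in> carrier_vec N" "i < N"
  shows "\<bar>v $ i\<bar> \<le> vnorm v"
proof -
  have "\<bar>v $ i\<bar> = sqrt ((v $ i)\<^sup>2)" by simp
  also have "\<dots> \<le> sqrt (\<Sum>j<N. (v $ j)\<^sup>2)"
    using assms by (intro real_sqrt_le_mono member_le_sum) auto
  finally show ?thesis using assms vnorm_eq_L2_set by (simp add: L2_set_def)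
qed

lemma LIMSEQ_0_if_abs_le:
  fixes f g :: "nat \<Rightarrow> real"
  assumes "\<And>k. \<bar>f k\<bar> \<le> g k" and "g \<longlonglongrightarrow> 0"
  shows "f \<longlonglongrightarrow> 0"
proof -
  have "(\<lambda>k. \<bar>f k\<bar>) \<longlonglongrightarrow> 0"
    by (rule tendsto_sandwich[of "\<lambda>_. 0" _ _ g]) (use assms in auto)
  thus ?thesis by (simp add: tendsto_rabs_zero_iff)
qed

lemma vec_tendsto_iff_index:
  fixes X :: "nat \<Rightarrow> real vec"
  assumes X: "\<And>k. X k \<in> carrier_vec N" and l: "l \<in> carrier_vec N"
  shows "vec_tendsto X l \<longleftrightarrow> (\<forall>i<N. (\<lambda>k. X k $ i) \<longlonglongrightarrow> l $ i)"
proof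
  assume t: "vec_tendsto X l"
  show "\<forall>i<N. (\<lambda>k. X k $ i) \<longlonglongrightarrow> l $ i"
  proof (intro allI impI)
    fix i assume i: "i < N"
    have "(\<lambda>k. X k $ i - l $ i) \<longlonglongrightarrow> 0"
    proof (rule LIMSEQ_0_if_abs_le)
      show "\<bar>X k $ i - l $ i\<bar> \<le> vnorm (X k - l)" for k
        using abs_index_le_vnorm[of "X k - l" N i] X[of k] l i by simp
    qed (use t in \<open>simp add: vec_tendsto_def\<close>)
    thus "(\<lambda>k. X k $ i) \<longlonglongrightarrow> l $ i" by (rule LIM_zero_cancel)
  qed
next
  assume "\<forall>i<N. (\<lambda>k. X k $ i) \<longlonglongrightarrow> l $ i"
  hence "(\<lambda>k. sqrt (\<Sum>i<N. (X k $ i - l $ i)\<^sup>2)) \<longlonglongrightarrow> sqrt (\<Sum>i<N. (l $ i - l $ i)\<^sup>2)"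
    by (intro tendsto_intros) auto
  moreover have "\<And>k. vnorm (X k - l) = sqrt (\<Sum>i<N. (X k $ i - l $ i)\<^sup>2)"
    using X l by (simp add: vnorm_eq_L2_set[of _ N] L2_set_def)
  ultimately show "vec_tendsto X l" unfolding vec_tendsto_def by simp
qed

lemma vec_tendsto_vnorm_diff:
  assumes X: "\<And>k. X k \<in> carrier_vec N" and l: "l \<in> carrier_vec N" and z: "z \<in> carrier_vec N"
    and t: "vec_tendsto X l"
  shows "(\<lambda>k. vnorm (X k - z)) \<longlonglongrightarrow> vnorm (l - z)"
proof -
  have "(\<lambda>k. vnorm (X k - z) - vnorm (l - z)) \<longlonglongrightarrow> 0"
    by (rule LIMSEQ_0_if_abs_le[OF abs_vnorm_diff_le[OF X l z]])
      (use t in \<open>simp add: vec_tendsto_def\<close>)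
  thus ?thesis by (rule LIM_zero_cancel)
qed

lemma bounded_vec_seq_subseq_convergent_indices:
  fixes X :: "nat \<Rightarrow> real vec"
  assumes X: "\<And>k. X k \<in> carrier_vec N" and B: "\<And>k. vnorm (X k) \<le> B" and "m \<le> N"
  shows "\<exists>r. strict_mono r \<and> (\<forall>i<m. convergent (\<lambda>k. X (r k) $ i))"
  using \<open>m \<le> N\<close>
proof (induct m)
  case 0
  show ?case using strict_mono_id by blast
next
  case (Suc m)
  then obtain r where r: "strict_mono r" "\<forall>i<m. convergent (\<lambda>k. X (r k) $ i)" by auto
  obtain r' where r': "strict_mono r'" "monoseq (\<lambda>k. X (r (r' k)) $ m)"
    using seq_monosub[of "\<lambda>k. X (r k) $ m"] by blast
  have "\<bar>X k $ m\<bar> \<le> B" for k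
    using abs_index_le_vnorm[OF X, of m k] B[of k] Suc.prems by simp
  hence "Bseq (\<lambda>k. X (r (r' k)) $ m)" by (intro BseqI'[of _ B]) (simp add: real_norm_def)
  hence new: "convergent (\<lambda>k. X (r (r' k)) $ m)" using r'(2) Bseq_monoseq_convergent by blast
  have old: "convergent (\<lambda>k. X (r (r' k)) $ i)" if "i < m" for i
    using convergent_subseq_convergent[OF r(2)[rule_format, OF that] r'(1)] by (simp add: o_def)
  have "strict_mono (\<lambda>k. r (r' k))" using strict_mono_o[OF r(1) r'(1)] by (simp add: o_def)
  moreover have "\<forall>i<Suc m. convergent (\<lambda>k. X (r (r' k)) $ i)"
  proof (intro allI impI)
    fix i assume "i < Suc m"
    thus "convergent (\<lambda>k. X (r (r' k)) $ i)" using new old by (cases "i = m") simp_all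
  qed
  ultimately show ?case by (intro exI[of _ "\<lambda>k. r (r' k)"] conjI)
qed

lemma bounded_vec_seq_convergent_subseq:
  fixes X :: "nat \<Rightarrow> real vec"
  assumes X: "\<And>k. X k \<in> carrier_vec N" and B: "\<And>k. vnorm (X k) \<le> B"
  obtains r l where "strict_mono r" "l \<in> carrier_vec N" "vec_tendsto (X \<circ> r) l"
proof -
  obtain r where r: "strict_mono r" "\<forall>i<N. convergent (\<lambda>k. X (r k) $ i)"
    using bounded_vec_seq_subseq_convergent_indices[where X=X, OF X B order_refl] by blast
  define l where "l = vec N (\<lambda>i. lim (\<lambda>k. X (r k) $ i))"
  have l: "l \<in> carrier_vec N" by (simp add: l_def)
  have "\<forall>i<N. (\<lambda>k. (X \<circ> r) k $ i) \<longlonglongrightarrow> l $ i"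
    using r(2) by (simp add: l_def convergent_LIMSEQ_iff)
  hence "vec_tendsto (X \<circ> r) l" using vec_tendsto_iff_index[of "X \<circ> r" N l] X l by simp
  with r(1) l show ?thesis by (rule that)
qed

section \<open>Quadratic forms\<close>

lemma quad_form_tendsto:
  fixes A :: "real mat" and X :: "nat \<Rightarrow> real vec"
  assumes A: "A \<in> carrier_mat N N" and X: "\<And>k. X k \<in> carrier_vec N" and l: "l \<in> carrier_vec N"
    and t: "vec_tendsto X l"
  shows "(\<lambda>k. X k \<bullet> (A *\<^sub>v X k)) \<longlonglongrightarrow> l \<bullet> (A *\<^sub>v l)"
proof -
  have expand: "x \<bullet> (A *\<^sub>v x) = (\<Sum>i<N. x $ i * (\<Sum>j<N. A $$ (i,j) * x $ j))"
    if "x \<in> carrier_vec N" for x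
    using A that by (simp add: scalar_prod_def atLeast0LessThan)
  have "\<forall>i<N. (\<lambda>k. X k $ i) \<longlonglongrightarrow> l $ i" using t vec_tendsto_iff_index[OF X l] by simp
  hence "(\<lambda>k. \<Sum>i<N. X k $ i * (\<Sum>j<N. A $$ (i,j) * X k $ j))
         \<longlonglongrightarrow> (\<Sum>i<N. l $ i * (\<Sum>j<N. A $$ (i,j) * l $ j))"
    by (intro tendsto_intros) auto
  thus ?thesis using expand[OF X] expand[OF l] by simp
qed

lemma scalar_prod_sym_mat:
  fixes A :: "real mat"
  assumes A: "A \<in> carrier_mat N N" and sym: "transpose_mat A = A"
    and x: "x \<in> carrier_vec N" and y: "y \<in> carrier_vec N"
  shows "x \<bullet> (A *\<^sub>v y) = y \<bullet> (A *\<^sub>v x)"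
proof -
  have "(transpose_mat A *\<^sub>v x) \<bullet> y = x \<bullet> (A *\<^sub>v y)" by (rule transpose_vec_mult_scalar[OF A y x])
  thus ?thesis using sym comm_scalar_prod[of "A *\<^sub>v x" N y] A x y by simp
qed

text \<open>The form is continuous and positive on the compact unit sphere.\<close>
lemma pos_def_coercive:
  fixes A :: "real mat"
  assumes A: "A \<in> carrier_mat N N"
    and pd: "\<forall>x \<in> carrier_vec N. x \<noteq> 0\<^sub>v N \<longrightarrow> x \<bullet> (A *\<^sub>v x) > 0"
  obtains c where "c > 0" "\<forall>x \<in> carrier_vec N. c * (x \<bullet> x) \<le> x \<bullet> (A *\<^sub>v x)"
proof (rule ccontr)
  assume "\<not> thesis"
  hence "\<forall>c>0. \<exists>x \<in> carrier_vec N. x \<bullet> (A *\<^sub>v x) < c * (x \<bullet> x)"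
    using that by (meson not_le)
  hence "\<forall>k. \<exists>x \<in> carrier_vec N. x \<bullet> (A *\<^sub>v x) < inverse (real (Suc k)) * (x \<bullet> x)"
    by simp
  then obtain xs where xs: "\<And>k. xs k \<in> carrier_vec N"
    and small: "\<And>k. xs k \<bullet> (A *\<^sub>v xs k) < inverse (real (Suc k)) * (xs k \<bullet> xs k)"
    by metis
  have pos: "xs k \<bullet> xs k > 0" for k
  proof -
    have "xs k \<noteq> 0\<^sub>v N" using small[of k] A by auto
    thus ?thesis using scalar_prod_self_eq_0_iff[OF xs] scalar_prod_self_nonneg[of "xs k"]
      by (simp add: order_less_le)
  qed
  define u where "u k = (1 / sqrt (xs k \<bullet> xs k)) \<cdot>\<^sub>v xs k" for k
  have u: "u k \<in> carrier_vec N" for k unfolding u_def using xs by simp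
  have unit: "u k \<bullet> u k = 1" for k
    unfolding u_def using xs[of k] pos[of k] by (simp add: power2_eq_square[symmetric])
  have uAu: "u k \<bullet> (A *\<^sub>v u k) \<le> inverse (real (Suc k))" for k
  proof -
    have "u k \<bullet> (A *\<^sub>v u k) = (xs k \<bullet> (A *\<^sub>v xs k)) / (xs k \<bullet> xs k)"
      unfolding u_def using xs[of k] pos[of k] A
      by (simp add: mult_mat_vec[of _ N N] power2_eq_square[symmetric])
    thus ?thesis using small[of k] pos[of k] by (simp add: divide_le_eq)
  qed
  have "vnorm (u k) \<le> 1" for k using unit unfolding vnorm_def by simp
  then obtain r l where r: "strict_mono r" and l: "l \<in> carrier_vec N" and t: "vec_tendsto (u \<circ> r) l"
    using bounded_vec_seq_convergent_subseq[where X=u, OF u] by blast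
  have ur: "(u \<circ> r) k \<in> carrier_vec N" for k using u by simp
  have "(\<lambda>k. (u \<circ> r) k \<bullet> (1\<^sub>m N *\<^sub>v (u \<circ> r) k)) \<longlonglongrightarrow> l \<bullet> (1\<^sub>m N *\<^sub>v l)"
    by (rule quad_form_tendsto[OF _ ur l t]) simp
  hence "(\<lambda>k. 1::real) \<longlonglongrightarrow> l \<bullet> l" using unit u l by simp
  hence "l \<bullet> l = 1" using LIMSEQ_const_iff by metis
  hence "l \<noteq> 0\<^sub>v N" by auto
  moreover have "l \<bullet> (A *\<^sub>v l) \<le> 0"
  proof (rule LIMSEQ_le[OF quad_form_tendsto[OF A ur l t] LIMSEQ_inverse_real_of_nat])
    show "\<exists>K. \<forall>k\<ge>K. (u \<circ> r) k \<bullet> (A *\<^sub>v (u \<circ> r) k) \<le> inverse (real (Suc k))"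
    proof (intro exI allI impI)
      fix k :: nat
      have "inverse (real (Suc (r k))) \<le> inverse (real (Suc k))"
        using seq_suble[OF r, of k] by (intro le_imp_inverse_le) auto
      thus "(u \<circ> r) k \<bullet> (A *\<^sub>v (u \<circ> r) k) \<le> inverse (real (Suc k))"
        using order_trans[OF uAu[of "r k"]] by simp
    qed
  qed
  ultimately show False using pd l by force
qed

section \<open>Moore--Penrose pseudoinverse of a symmetric matrix\<close>

definition is_pinv :: "real mat \<Rightarrow> real mat \<Rightarrow> bool" where
  "is_pinv M X \<longleftrightarrow> X \<in> carrier_mat (dim_col M) (dim_row M) \<and>
                     M * X * M = M \<and> X * M * X = X \<and>
                     transpose_mat (M * X) = M * X \<and> transpose_mat (X * M) = X * M"

context
  fixes M X Y :: "real mat" and n :: nat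
  assumes M: "M \<in> carrier_mat n n" and PX: "is_pinv M X" and PY: "is_pinv M Y"
begin

private lemma carriers: "X \<in> carrier_mat n n" "Y \<in> carrier_mat n n"
  using PX PY M unfolding is_pinv_def by auto

private lemma square_mult_closed:
  "\<And>A B :: real mat. A \<in> carrier_mat n n \<Longrightarrow> B \<in> carrier_mat n n \<Longrightarrow> A * B \<in> carrier_mat n n"
  "\<And>A :: real mat. A \<in> carrier_mat n n \<Longrightarrow> transpose_mat A \<in> carrier_mat n n"
  "\<And>A B C :: real mat. A \<in> carrier_mat n n \<Longrightarrow> B \<in> carrier_mat n n \<Longrightarrow> C \<in> carrier_mat n n \<Longrightarrow>
     A * B * C = A * (B * C)"
  by auto

private lemma transpose_mult_square: "(A :: real mat) \<in> carrier_mat n n \<Longrightarrow> B \<in> carrier_mat n n \<Longrightarrow>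
    transpose_mat (A * B) = transpose_mat B * transpose_mat A"
  by (rule transpose_mult)

private lemmas square_simps = square_mult_closed transpose_mult_square M carriers

private lemma X_conds: "M * X * M = M" "X * M * X = X" "transpose_mat (M * X) = M * X"
    "transpose_mat (X * M) = X * M"
  using PX unfolding is_pinv_def by auto

private lemma Y_conds: "M * Y * M = M" "Y * M * Y = Y" "transpose_mat (M * Y) = M * Y"
    "transpose_mat (Y * M) = Y * M"
  using PY unfolding is_pinv_def by auto

private lemma left_absorb: "X = X * (M * Y)"
proof -
  have tM: "transpose_mat M = transpose_mat M * (transpose_mat Y * transpose_mat M)"
    using arg_cong[OF Y_conds(1), of transpose_mat] by (simp add: square_simps del: transpose_carrier_mat)
  have "X = X * transpose_mat (M * X)" using X_conds by (simp add: square_simps)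
  also have "\<dots> = X * (transpose_mat X * (transpose_mat M * (transpose_mat Y * transpose_mat M)))"
    using tM by (simp add: square_simps del: transpose_carrier_mat)
  also have "\<dots> = X * (transpose_mat (M * X) * transpose_mat (M * Y))"
    by (simp add: square_simps del: transpose_carrier_mat)
  also have "\<dots> = X * ((M * X) * (M * Y))" using X_conds Y_conds by simp
  also have "\<dots> = (X * M * X) * (M * Y)" by (simp add: square_simps)
  finally show ?thesis using X_conds by simp
qed

private lemma right_absorb: "Y = X * M * Y"
proof -
  have tM: "transpose_mat M = transpose_mat M * (transpose_mat X * transpose_mat M)"
    using arg_cong[OF X_conds(1), of transpose_mat] by (simp add: square_simps del: transpose_carrier_mat)
  have "Y = transpose_mat (Y * M) * Y" using Y_conds by (simp add: square_simps)
  also have "\<dots> = ((transpose_mat M * (transpose_mat X * transpose_mat M)) * transpose_mat Y) * Y"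
    using tM by (simp add: square_simps del: transpose_carrier_mat)
  also have "\<dots> = (transpose_mat (X * M) * transpose_mat (Y * M)) * Y"
    by (simp add: square_simps del: transpose_carrier_mat)
  also have "\<dots> = ((X * M) * (Y * M)) * Y" using X_conds Y_conds by simp
  also have "\<dots> = X * M * (Y * M * Y)" by (simp add: square_simps)
  finally show ?thesis using Y_conds by simp
qed

lemma is_pinv_unique: "X = Y"
  using left_absorb right_absorb by (simp add: square_simps)

end

lemma wide_mat_nontrivial_kernel:
  fixes C :: "real mat"
  assumes C: "C \<in> carrier_mat a b" and ab: "a < b"
  shows "\<exists>v \<in> carrier_vec b. v \<noteq> 0\<^sub>v b \<and> C *\<^sub>v v = 0\<^sub>v a"
proof -
  define c where "c = (\<lambda>i. vec b (\<lambda>j. if i < a then C $$ (i,j) else 0) :: real vec)"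
  define C' where "C' = mat\<^sub>r b b (\<lambda>i. if i = b - 1 then 0\<^sub>v b else c i)"
  have "det C' = 0" unfolding C'_def
    by (rule det_row_0, insert ab, auto simp: c_def)
  moreover have C'c: "C' \<in> carrier_mat b b" unfolding C'_def by auto
  ultimately obtain v where v: "v \<in> carrier_vec b" "v \<noteq> 0\<^sub>v b" "C' *\<^sub>v v = 0\<^sub>v b"
    using det_0_iff_vec_prod_zero_field[OF C'c] by auto
  have "C *\<^sub>v v = 0\<^sub>v a"
  proof (rule eq_vecI)
    fix i assume i: "i < dim_vec (0\<^sub>v a :: real vec)"
    hence ia: "i < a" by simp
    have "(C' *\<^sub>v v) $ i = 0" using v(3) ia ab by simp
    moreover have "(C' *\<^sub>v v) $ i = (C *\<^sub>v v) $ i"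
      using ia ab C v(1) unfolding C'_def c_def
      by (auto simp: mult_mat_vec_def scalar_prod_def)
    ultimately show "(C *\<^sub>v v) $ i = 0\<^sub>v a $ i" using ia by simp
  qed (use C in simp)
  thus ?thesis using v by blast
qed

lemma mat_eq_if_mult_vec_eq:
  fixes A B :: "real mat"
  assumes A: "A \<in> carrier_mat n m" and B: "B \<in> carrier_mat n m"
    and eq: "\<And>x. x \<in> carrier_vec m \<Longrightarrow> A *\<^sub>v x = B *\<^sub>v x"
  shows "A = B"
proof (rule eq_matI)
  fix i j assume i: "i < dim_row B" and j: "j < dim_col B"
  have "A *\<^sub>v unit_vec m j = B *\<^sub>v unit_vec m j" using eq by simp
  hence "(A *\<^sub>v unit_vec m j) $ i = (B *\<^sub>v unit_vec m j) $ i" by simp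
  thus "A $$ (i, j) = B $$ (i, j)" using A B i j by simp
qed (use A B in auto)

fun pow_lincomb :: "real mat \<Rightarrow> nat \<Rightarrow> (nat \<Rightarrow> real) \<Rightarrow> nat \<Rightarrow> real mat" where
  "pow_lincomb M n c 0 = 0\<^sub>m n n"
| "pow_lincomb M n c (Suc K) = pow_lincomb M n c K + c K \<cdot>\<^sub>m (M ^\<^sub>m K)"

context
  fixes M :: "real mat" and n :: nat
  assumes M: "M \<in> carrier_mat n n"
begin

lemma pow_lincomb_carrier: "pow_lincomb M n c K \<in> carrier_mat n n"
  using M by (induct K) auto

lemma pow_lincomb_index: "a < n \<Longrightarrow> b < n \<Longrightarrow> pow_lincomb M n c K $$ (a,b) = (\<Sum>i<K. c i * (M ^\<^sub>m i) $$ (a,b))"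
proof (induct K)
  case (Suc K)
  have "pow_lincomb M n c (Suc K) $$ (a,b) = pow_lincomb M n c K $$ (a,b) + c K * (M ^\<^sub>m K) $$ (a,b)"
    using Suc.prems M pow_lincomb_carrier[of c K] by simp
  thus ?case using Suc by simp
qed simp

lemma pow_mat_commute: "M * M ^\<^sub>m k = M ^\<^sub>m k * M"
proof (induct k)
  case 0 thus ?case using M by simp
next
  case (Suc k)
  have "M * M ^\<^sub>m Suc k = (M * M ^\<^sub>m k) * M" using assoc_mult_mat[OF M pow_carrier_mat[OF M, of k] M] by simp
  also have "\<dots> = M ^\<^sub>m Suc k * M" using Suc by simp
  finally show ?case .
qed

lemma transpose_pow_mat: "transpose_mat M = M \<Longrightarrow> transpose_mat (M ^\<^sub>m k) = M ^\<^sub>m k"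
proof (induct k)
  case 0 thus ?case using M by simp
next
  case (Suc k)
  have "transpose_mat (M ^\<^sub>m Suc k) = transpose_mat M * transpose_mat (M ^\<^sub>m k)"
    using M by (simp add: transpose_mult[of _ n n _ n])
  also have "\<dots> = M ^\<^sub>m Suc k" using Suc pow_mat_commute by simp
  finally show ?case .
qed

lemma pow_lincomb_commute: "M * pow_lincomb M n c K = pow_lincomb M n c K * M"
proof (induct K)
  case 0 thus ?case using M by simp
next
  case (Suc K)
  have P: "pow_lincomb M n c K \<in> carrier_mat n n" by (rule pow_lincomb_carrier)
  have "M * pow_lincomb M n c (Suc K) = M * pow_lincomb M n c K + M * (c K \<cdot>\<^sub>m (M ^\<^sub>m K))"
    using M P by (simp add: mult_add_distrib_mat)
  also have "\<dots> = pow_lincomb M n c K * M + (c K \<cdot>\<^sub>m (M ^\<^sub>m K)) * M"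
    using M Suc pow_mat_commute[of K] mult_smult_distrib[OF M pow_carrier_mat[OF M, of K]] mult_smult_assoc_mat[OF pow_carrier_mat[OF M, of K] M] by simp
  also have "\<dots> = pow_lincomb M n c (Suc K) * M" using M P by (simp add: add_mult_distrib_mat)
  finally show ?case .
qed

lemma transpose_pow_lincomb: "transpose_mat M = M \<Longrightarrow> transpose_mat (pow_lincomb M n c K) = pow_lincomb M n c K"
proof (induct K)
  case 0 thus ?case by simp
next
  case (Suc K)
  have ts: "transpose_mat (c K \<cdot>\<^sub>m (M ^\<^sub>m K)) = c K \<cdot>\<^sub>m transpose_mat (M ^\<^sub>m K)"
    by (rule eq_matI) auto
  thus ?case using Suc pow_lincomb_carrier[of c K] M transpose_pow_mat
    by (simp add: transpose_add[of _ n n])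
qed

lemma pow_lincomb_Suc_shift: "pow_lincomb M n c (Suc K) = c 0 \<cdot>\<^sub>m 1\<^sub>m n + M * pow_lincomb M n (c \<circ> Suc) K"
proof (induct K)
  case 0 thus ?case using M by simp
next
  case (Suc K)
  have P: "pow_lincomb M n (c \<circ> Suc) K \<in> carrier_mat n n" by (rule pow_lincomb_carrier)
  have "pow_lincomb M n c (Suc (Suc K)) = (c 0 \<cdot>\<^sub>m 1\<^sub>m n + M * pow_lincomb M n (c \<circ> Suc) K) + c (Suc K) \<cdot>\<^sub>m (M ^\<^sub>m Suc K)"
    by (subst pow_lincomb.simps(2), subst Suc, rule refl)
  also have "M ^\<^sub>m Suc K = M * M ^\<^sub>m K" using pow_mat_commute by simp
  also have "(c 0 \<cdot>\<^sub>m 1\<^sub>m n + M * pow_lincomb M n (c \<circ> Suc) K) + c (Suc K) \<cdot>\<^sub>m (M * M ^\<^sub>m K)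
      = c 0 \<cdot>\<^sub>m 1\<^sub>m n + M * (pow_lincomb M n (c \<circ> Suc) K + c (Suc K) \<cdot>\<^sub>m (M ^\<^sub>m K))"
    using M P mult_smult_distrib[OF M pow_carrier_mat[OF M, of K]] by (simp add: mult_add_distrib_mat assoc_add_mat[of _ n n])
  also have "\<dots> = c 0 \<cdot>\<^sub>m 1\<^sub>m n + M * pow_lincomb M n (c \<circ> Suc) (Suc K)" by simp
  finally show ?case .
qed

lemma pow_lincomb_leading_zeros: "(\<forall>i<j. c i = 0) \<Longrightarrow> pow_lincomb M n c (j + K) = M ^\<^sub>m j * pow_lincomb M n (\<lambda>i. c (i + j)) K"
proof (induct j arbitrary: c)
  case 0 thus ?case using M left_mult_one_mat[OF pow_lincomb_carrier] by simp
next
  case (Suc j)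
  have IH: "pow_lincomb M n (c \<circ> Suc) (j + K) = M ^\<^sub>m j * pow_lincomb M n (\<lambda>i. (c \<circ> Suc) (i + j)) K"
    using Suc by auto
  have "pow_lincomb M n c (Suc j + K) = c 0 \<cdot>\<^sub>m 1\<^sub>m n + M * pow_lincomb M n (c \<circ> Suc) (j + K)"
    using pow_lincomb_Suc_shift by simp
  also have "\<dots> = M * (M ^\<^sub>m j * pow_lincomb M n (\<lambda>i. c (i + Suc j)) K)"
  proof -
    have z: "(0::real) \<cdot>\<^sub>m 1\<^sub>m n = 0\<^sub>m n n" by (rule eq_matI) auto
    have "M * (M ^\<^sub>m j * pow_lincomb M n (\<lambda>i. c (i + Suc j)) K) \<in> carrier_mat n n"
      using mult_carrier_mat[OF M mult_carrier_mat[OF pow_carrier_mat[OF M] pow_lincomb_carrier]] .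
    thus ?thesis using Suc.prems IH z by simp
  qed
  also have "\<dots> = (M * M ^\<^sub>m j) * pow_lincomb M n (\<lambda>i. c (i + Suc j)) K"
    by (rule assoc_mult_mat[symmetric]) (use M pow_lincomb_carrier in auto)
  also have "\<dots> = M ^\<^sub>m Suc j * pow_lincomb M n (\<lambda>i. c (i + Suc j)) K"
    using pow_mat_commute[of j] by simp
  finally show ?case .
qed

lemma pow_mat_kernel:
  assumes sym: "transpose_mat M = M" and x: "x \<in> carrier_vec n"
  shows "M ^\<^sub>m (Suc s) *\<^sub>v x = 0\<^sub>v n \<Longrightarrow> M *\<^sub>v x = 0\<^sub>v n"
  using x
proof (induct s arbitrary: x)
  case 0 thus ?case using M by simp
next
  case (Suc s)
  have "M ^\<^sub>m Suc s *\<^sub>v (M *\<^sub>v x) = 0\<^sub>v n"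
    using Suc.prems M pow_mat_commute[of "Suc s"] by (metis assoc_mult_mat_vec pow_carrier_mat pow_mat.simps(2))
  hence mmx: "M *\<^sub>v (M *\<^sub>v x) = 0\<^sub>v n" using Suc.hyps M Suc.prems by simp
  have "(M *\<^sub>v x) \<bullet> (M *\<^sub>v x) = (transpose_mat M *\<^sub>v (M *\<^sub>v x)) \<bullet> x"
    using transpose_vec_mult_scalar[of M n n x "M *\<^sub>v x"] M Suc.prems by simp
  also have "\<dots> = 0" using sym mmx Suc.prems by simp
  finally show ?case using scalar_prod_self_eq_0_iff[of "M *\<^sub>v x" n] M Suc.prems by simp
qed

end

lemma is_pinv_from_commuting:
  fixes M T :: "real mat"
  assumes M: "M \<in> carrier_mat n n" and T: "T \<in> carrier_mat n n"
    and sM: "transpose_mat M = M" and sT: "transpose_mat T = T"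
    and cm: "M * T = T * M" and MMT: "M * (M * T) = M"
  shows "is_pinv M (T * (M * T))" and "M * (T * (M * T)) = T * (M * T) * M"
proof -
  have mc: "\<And>A B :: real mat. A \<in> carrier_mat n n \<Longrightarrow> B \<in> carrier_mat n n \<Longrightarrow> A * B \<in> carrier_mat n n" by auto
  have as: "\<And>A B C :: real mat. A \<in> carrier_mat n n \<Longrightarrow> B \<in> carrier_mat n n \<Longrightarrow> C \<in> carrier_mat n n \<Longrightarrow> A * B * C = A * (B * C)"
    by auto
  define E where "E = M * T"
  have Ec: "E \<in> carrier_mat n n" unfolding E_def using M T by auto
  note sq = mc as M T Ec
  have EM: "E * M = M"
  proof -
    have "E * M = M * (T * M)" unfolding E_def by (simp add: sq)
    also have "\<dots> = M" using cm MMT by simp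
    finally show ?thesis .
  qed
  have ET: "E * T = T * E"
  proof -
    have "E * T = (T * M) * T" unfolding E_def by (simp only: cm)
    also have "\<dots> = T * E" unfolding E_def by (simp add: sq)
    finally show ?thesis .
  qed
  have EE: "E * E = E"
  proof -
    have "E * E = (M * T) * (M * T)" unfolding E_def ..
    also have "\<dots> = M * ((T * M) * T)" by (simp add: sq)
    also have "\<dots> = M * ((M * T) * T)" by (simp only: cm)
    also have "\<dots> = (M * (M * T)) * T" by (simp add: sq)
    also have "\<dots> = E" using MMT unfolding E_def by simp
    finally show ?thesis .
  qed
  have sE: "transpose_mat E = E"
    unfolding E_def using transpose_mult[OF M T] sM sT cm by simp
  have MX: "M * (T * E) = E"
  proof -
    have "M * (T * E) = (M * T) * E" by (simp add: sq)
    thus ?thesis using EE unfolding E_def by simp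
  qed
  have XM: "T * E * M = E"
  proof -
    have "T * E * M = T * (E * M)" by (simp add: sq)
    thus ?thesis using EM unfolding E_def using cm by simp
  qed
  have "T * (M * T) = T * E" unfolding E_def ..
  moreover have "M * (T * E) * M = M" using MX EM by simp
  moreover have "T * E * M * (T * E) = T * E"
  proof -
    have "T * E * M * (T * E) = E * (T * E)" using XM by simp
    also have "\<dots> = (E * T) * E" by (simp add: sq)
    also have "\<dots> = T * (E * E)" using ET by (simp add: sq)
    finally show ?thesis using EE by simp
  qed
  moreover have "T * E \<in> carrier_mat n n" by (simp add: sq)
  ultimately show "is_pinv M (T * (M * T))" unfolding is_pinv_def using MX XM sE M by simp
  show "M * (T * (M * T)) = T * (M * T) * M" using MX XM unfolding E_def by simp
qed

lemma zero_mat_mult_vec: "x \<in> carrier_vec m \<Longrightarrow> (0\<^sub>m n m :: real mat) *\<^sub>v x = 0\<^sub>v n"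
  by (intro eq_vecI) (auto simp: scalar_prod_def)

lemma smult_mat_mult_vec: "A \<in> carrier_mat n m \<Longrightarrow> x \<in> carrier_vec m \<Longrightarrow> ((a::real) \<cdot>\<^sub>m A) *\<^sub>v x = a \<cdot>\<^sub>v (A *\<^sub>v x)"
  by (intro eq_vecI) (auto simp: scalar_prod_def sum_distrib_left ac_simps)

lemma pow_lincomb_vanishing:
  fixes M :: "real mat"
  assumes M: "M \<in> carrier_mat n n"
  obtains c where "pow_lincomb M n c (Suc (n * n)) = 0\<^sub>m n n" and "\<exists>i<Suc (n * n). c i \<noteq> 0"
proof -
  define K where "K = n * n"
  define C where "C = mat K (Suc K) (\<lambda>(r,i). (M ^\<^sub>m i) $$ (r div n, r mod n))"
  obtain v where v: "v \<in> carrier_vec (Suc K)" "v \<noteq> 0\<^sub>v (Suc K)" "C *\<^sub>v v = 0\<^sub>v K"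
    using wide_mat_nontrivial_kernel[of C K "Suc K"] by (auto simp: C_def)
  define c where "c = (\<lambda>i. v $ i)"
  have "pow_lincomb M n c (Suc K) = 0\<^sub>m n n"
  proof (rule eq_matI)
    fix a b assume "a < dim_row (0\<^sub>m n n :: real mat)" and "b < dim_col (0\<^sub>m n n :: real mat)"
    hence a: "a < n" and b: "b < n" by auto
    have "Suc a * n \<le> n * n" using a by (intro mult_le_mono1) simp
    hence r: "a * n + b < K" unfolding K_def using b by simp
    have dv: "(a * n + b) div n = a" and md: "(a * n + b) mod n = b" using b by auto
    have "(C *\<^sub>v v) $ (a * n + b) = 0" using v(3) r by simp
    moreover have "(C *\<^sub>v v) $ (a * n + b) = (\<Sum>i<Suc K. (M ^\<^sub>m i) $$ (a, b) * v $ i)"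
      using r v(1) dv md unfolding C_def by (simp add: scalar_prod_def atLeast0LessThan)
    ultimately have "(\<Sum>i<Suc K. c i * (M ^\<^sub>m i) $$ (a, b)) = 0"
      unfolding c_def by (simp add: mult.commute)
    thus "pow_lincomb M n c (Suc K) $$ (a, b) = 0\<^sub>m n n $$ (a, b)"
      using pow_lincomb_index[OF M a b, of c "Suc K"] a b by (simp del: pow_lincomb.simps)
  qed (use pow_lincomb_carrier[OF M] M in auto)
  moreover have "\<exists>i<Suc K. c i \<noteq> 0"
    using v(1,2) unfolding c_def by (metis carrier_vecD eq_vecI index_zero_vec(1,2))
  ultimately show ?thesis using that unfolding K_def by blast
qed

text \<open>Some nontrivial combination of the \<open>n\<^sup>2 + 1\<close> matrices \<open>M\<^sup>0, \<dots>, M\<^bsup>n\<^sup>2\<^esup>\<close> vanishes. Dividing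
  out its lowest power \<open>M\<^sup>j\<close> (which loses nothing since \<open>ker M\<^bsup>j+1\<^esup> = ker M\<close> for symmetric \<open>M\<close>) leaves
  \<open>M (a I + M R) = 0\<close> with \<open>a \<noteq> 0\<close> and \<open>R\<close> a polynomial in \<open>M\<close>.\<close>
lemma symmetric_mat_annihilating_poly:
  fixes M :: "real mat"
  assumes M: "M \<in> carrier_mat n n" and sym: "transpose_mat M = M"
  obtains a c K where "a \<noteq> 0"
    and "\<And>x. x \<in> carrier_vec n \<Longrightarrow> M *\<^sub>v ((a \<cdot>\<^sub>m 1\<^sub>m n + M * pow_lincomb M n c K) *\<^sub>v x) = 0\<^sub>v n"
proof -
  obtain c where P0: "pow_lincomb M n c (Suc (n * n)) = 0\<^sub>m n n"
    and "\<exists>i<Suc (n * n). c i \<noteq> 0"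
    using pow_lincomb_vanishing[OF M] by blast
  then obtain i0 where i0: "i0 < Suc (n * n)" "c i0 \<noteq> 0" by blast
  define j where "j = (LEAST i. c i \<noteq> 0)"
  have cj: "c j \<noteq> 0" unfolding j_def by (rule LeastI[of _ i0], rule i0(2))
  have ji: "j \<le> i0" unfolding j_def by (rule Least_le, rule i0(2))
  have low: "\<forall>i<j. c i = 0" unfolding j_def using not_less_Least by blast
  define K where "K = n * n - j"
  have SK: "Suc (n * n) = j + Suc K" unfolding K_def using ji i0 by simp
  define Q where "Q = c j \<cdot>\<^sub>m 1\<^sub>m n + M * pow_lincomb M n (\<lambda>i. c (Suc i + j)) K"
  have Qc: "Q \<in> carrier_mat n n" unfolding Q_def using pow_lincomb_carrier[OF M] M by auto
  have "pow_lincomb M n (\<lambda>i. c (i + j)) (Suc K) = Q"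
    unfolding Q_def using pow_lincomb_Suc_shift[OF M, of "\<lambda>i. c (i + j)" K] by (simp add: o_def)
  hence MjQ: "M ^\<^sub>m j * Q = 0\<^sub>m n n" using pow_lincomb_leading_zeros[OF M low, of "Suc K"] P0 SK by simp
  have "M *\<^sub>v (Q *\<^sub>v x) = 0\<^sub>v n" if x: "x \<in> carrier_vec n" for x
  proof (cases j)
    case 0
    hence "Q = 0\<^sub>m n n" using MjQ M Qc by simp
    thus ?thesis using M x by (intro eq_vecI) (auto simp: scalar_prod_def)
  next
    case (Suc s)
    have "M ^\<^sub>m j *\<^sub>v (Q *\<^sub>v x) = 0\<^sub>v n"
      using MjQ assoc_mult_mat_vec[OF pow_carrier_mat[OF M] Qc x, of j, symmetric] x by (simp add: zero_mat_mult_vec)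
    thus ?thesis using pow_mat_kernel[OF M sym, of "Q *\<^sub>v x" s] Suc Qc x by simp
  qed
  with cj show ?thesis unfolding Q_def by (rule that)
qed

lemma symmetric_mat_inner_inverse:
  fixes M :: "real mat"
  assumes M: "M \<in> carrier_mat n n" and sym: "transpose_mat M = M"
  obtains T where "T \<in> carrier_mat n n" "transpose_mat T = T" "M * T = T * M" "M * (M * T) = M"
proof -
  obtain a c K where a: "a \<noteq> 0"
    and annihilate: "\<And>x. x \<in> carrier_vec n \<Longrightarrow> M *\<^sub>v ((a \<cdot>\<^sub>m 1\<^sub>m n + M * pow_lincomb M n c K) *\<^sub>v x) = 0\<^sub>v n"
    using symmetric_mat_annihilating_poly[OF M sym] by blast
  define R where "R = pow_lincomb M n c K"
  have Rc: "R \<in> carrier_mat n n" unfolding R_def by (rule pow_lincomb_carrier[OF M])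
  define T where "T = (- 1 / a) \<cdot>\<^sub>m R"
  have Tc: "T \<in> carrier_mat n n" unfolding T_def using Rc by simp
  have MMT: "M * (M * T) = M"
  proof (rule mat_eq_if_mult_vec_eq[OF _ M])
    show "M * (M * T) \<in> carrier_mat n n" using M Tc by simp
    fix x :: "real vec" assume x: "x \<in> carrier_vec n"
    have "M *\<^sub>v ((a \<cdot>\<^sub>m 1\<^sub>m n + M * R) *\<^sub>v x) = a \<cdot>\<^sub>v (M *\<^sub>v x) + M *\<^sub>v (M *\<^sub>v (R *\<^sub>v x))"
      using M Rc x by (simp add: add_mult_distrib_mat_vec[of _ n n] smult_mat_mult_vec[of _ n n]
          mult_add_distrib_mat_vec[of _ n n] mult_mat_vec[of _ n n])
    hence e: "a \<cdot>\<^sub>v (M *\<^sub>v x) + M *\<^sub>v (M *\<^sub>v (R *\<^sub>v x)) = 0\<^sub>v n"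
      using annihilate[OF x] unfolding R_def by simp
    have "(M * (M * T)) *\<^sub>v x = M *\<^sub>v (M *\<^sub>v (T *\<^sub>v x))"
      using assoc_mult_mat_vec[OF M mult_carrier_mat[OF M Tc] x] assoc_mult_mat_vec[OF M Tc x] by simp
    also have "T *\<^sub>v x = (- 1 / a) \<cdot>\<^sub>v (R *\<^sub>v x)" unfolding T_def using Rc x
      by (rule smult_mat_mult_vec)
    also have "M *\<^sub>v (M *\<^sub>v ((- 1 / a) \<cdot>\<^sub>v (R *\<^sub>v x))) = (- 1 / a) \<cdot>\<^sub>v (M *\<^sub>v (M *\<^sub>v (R *\<^sub>v x)))"
      using M Rc x by (simp add: mult_mat_vec[of _ n n])
    also have "\<dots> = M *\<^sub>v x"
    proof (rule eq_vecI)
      fix i assume "i < dim_vec (M *\<^sub>v x)"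
      hence i: "i < n" using M by simp
      have "a * (M *\<^sub>v x) $ i + (M *\<^sub>v (M *\<^sub>v (R *\<^sub>v x))) $ i = 0"
        using arg_cong[OF e, of "\<lambda>w. w $ i"] i M by simp
      thus "((- 1 / a) \<cdot>\<^sub>v (M *\<^sub>v (M *\<^sub>v (R *\<^sub>v x)))) $ i = (M *\<^sub>v x) $ i"
        using i M a by (simp add: field_simps)
    qed (use M in simp)
    finally show "(M * (M * T)) *\<^sub>v x = M *\<^sub>v x" .
  qed
  have cm: "M * T = T * M"
    unfolding T_def using pow_lincomb_commute[OF M] Rc M unfolding R_def
    by (simp add: mult_smult_distrib[OF M pow_lincomb_carrier[OF M]] mult_smult_assoc_mat[OF pow_lincomb_carrier[OF M] M])
  have sT: "transpose_mat T = T"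
  proof -
    have "transpose_mat T = (- 1 / a) \<cdot>\<^sub>m transpose_mat R" unfolding T_def by (rule eq_matI) auto
    thus ?thesis using transpose_pow_lincomb[OF M sym] unfolding T_def R_def by simp
  qed
  show ?thesis using Tc sT cm MMT by (rule that)
qed

lemma symmetric_is_pinv_exists:
  fixes M :: "real mat"
  assumes M: "M \<in> carrier_mat n n" and sym: "transpose_mat M = M"
  shows "\<exists>X. is_pinv M X \<and> M * X = X * M"
proof -
  obtain T where T: "T \<in> carrier_mat n n" "transpose_mat T = T" "M * T = T * M" "M * (M * T) = M"
    using symmetric_mat_inner_inverse[OF M sym] by blast
  show ?thesis using is_pinv_from_commuting[OF M T(1) sym T(2-4)] by blast
qed

lemma pinv_symmetric:
  fixes M :: "real mat"
  assumes M: "M \<in> carrier_mat n n" and sym: "transpose_mat M = M"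
  shows "is_pinv M (pinv M)" and "M * pinv M = pinv M * M"
proof -
  obtain X where X: "is_pinv M X" and MX: "M * X = X * M" using symmetric_is_pinv_exists[OF M sym] by blast
  have "pinv M = X" unfolding pinv_def
    by (rule the_equality, use X in \<open>simp add: is_pinv_def\<close>,
        use is_pinv_unique[OF M _ X] in \<open>simp add: is_pinv_def\<close>)
  thus "is_pinv M (pinv M)" and "M * pinv M = pinv M * M" using X MX by simp_all
qed

section \<open>Exact minimisation of a quadratic along a linear subspace\<close>

definition energy :: "real mat \<Rightarrow> real vec \<Rightarrow> real vec \<Rightarrow> real" where
  "energy A b v = (v \<bullet> (A *\<^sub>v v)) / 2 - b \<bullet> v"

lemma energy_lower_bound:
  fixes A :: "real mat"
  assumes c: "c > 0" and coercive: "\<forall>x \<in> carrier_vec N. c * (x \<bullet> x) \<le> x \<bullet> (A *\<^sub>v x)"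
    and b: "b \<in> carrier_vec N" and x: "x \<in> carrier_vec N"
  shows "- (b \<bullet> b) / (2 * c) \<le> energy A b x"
proof -
  have "0 \<le> (\<Sum>i<N. (c * x $ i - b $ i)\<^sup>2)" by (intro sum_nonneg) auto
  also have "\<dots> = (\<Sum>i<N. c\<^sup>2 * (x $ i * x $ i) - 2 * c * (b $ i * x $ i) + b $ i * b $ i)"
    by (intro sum.cong) (auto simp: power2_eq_square algebra_simps)
  also have "\<dots> = c\<^sup>2 * (x \<bullet> x) - 2 * c * (b \<bullet> x) + b \<bullet> b"
    using x b by (simp add: scalar_prod_def atLeast0LessThan sum.distrib sum_subtractf sum_distrib_left)
  finally have "0 \<le> (c\<^sup>2 * (x \<bullet> x) - 2 * c * (b \<bullet> x) + b \<bullet> b) / (2 * c)" using c by simp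
  also have "\<dots> = c * (x \<bullet> x) / 2 - b \<bullet> x + (b \<bullet> b) / (2 * c)"
    using c by (simp add: field_simps power2_eq_square)
  finally have "- (b \<bullet> b) / (2 * c) \<le> c * (x \<bullet> x) / 2 - b \<bullet> x" by simp
  also have "\<dots> \<le> energy A b x" unfolding energy_def using coercive x by simp
  finally show ?thesis .
qed

lemma scalar_prod_transpose_mult_vec:
  fixes W :: "real mat"
  assumes W: "W \<in> carrier_mat N m" and v: "v \<in> carrier_vec m" and y: "y \<in> carrier_vec N"
  shows "v \<bullet> (transpose_mat W *\<^sub>v y) = (W *\<^sub>v v) \<bullet> y"
proof -
  have "(transpose_mat W *\<^sub>v y) \<bullet> v = y \<bullet> (W *\<^sub>v v)" by (rule transpose_vec_mult_scalar[OF W v y])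
  thus ?thesis
    using comm_scalar_prod[of v m "transpose_mat W *\<^sub>v y"] comm_scalar_prod[of y N "W *\<^sub>v v"] W v y
    by simp
qed

lemma scalar_prod_gram_mult_vec:
  fixes W A :: "real mat"
  assumes W: "W \<in> carrier_mat N m" and A: "A \<in> carrier_mat N N"
    and v: "v \<in> carrier_vec m" and w: "w \<in> carrier_vec m"
  shows "v \<bullet> ((transpose_mat W * A * W) *\<^sub>v w) = (W *\<^sub>v v) \<bullet> (A *\<^sub>v (W *\<^sub>v w))"
proof -
  have tW: "transpose_mat W \<in> carrier_mat m N" using W by simp
  have "(transpose_mat W * A * W) *\<^sub>v w = (transpose_mat W * A) *\<^sub>v (W *\<^sub>v w)"
    by (rule assoc_mult_mat_vec[OF mult_carrier_mat[OF tW A] W w])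
  also have "\<dots> = transpose_mat W *\<^sub>v (A *\<^sub>v (W *\<^sub>v w))"
    using tW A W w by simp
  finally have "(transpose_mat W * A * W) *\<^sub>v w = transpose_mat W *\<^sub>v (A *\<^sub>v (W *\<^sub>v w))" .
  thus ?thesis using scalar_prod_transpose_mult_vec[OF W v, of "A *\<^sub>v (W *\<^sub>v w)"] W A w by simp
qed

lemma transpose_gram_mat:
  fixes W A :: "real mat"
  assumes W: "W \<in> carrier_mat N m" and A: "A \<in> carrier_mat N N" and sym: "transpose_mat A = A"
  shows "transpose_mat (transpose_mat W * A * W) = transpose_mat W * A * W"
proof -
  have tW: "transpose_mat W \<in> carrier_mat m N" using W by simp
  show ?thesis
    using transpose_mult[OF mult_carrier_mat[OF tW A] W] transpose_mult[OF tW A] sym W A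
    by (simp add: assoc_mult_mat[OF tW A W])
qed

text \<open>Even when \<open>W\<^sup>T A W\<close> is singular, the pseudoinverse solves the normal equation: the residual
  \<open>z\<close> lies in \<open>ker (W\<^sup>T A W) = ker W\<close> and hence is orthogonal to \<open>W\<^sup>T b\<close>.\<close>
lemma pinv_solves_normal_equation:
  fixes W A :: "real mat" and b :: "real vec"
  assumes W: "W \<in> carrier_mat N m" and A: "A \<in> carrier_mat N N" and sym: "transpose_mat A = A"
    and pd: "\<forall>x \<in> carrier_vec N. x \<noteq> 0\<^sub>v N \<longrightarrow> x \<bullet> (A *\<^sub>v x) > 0"
    and b: "b \<in> carrier_vec N"
  defines "M \<equiv> transpose_mat W * A * W"
  shows "pinv M *\<^sub>v (transpose_mat W *\<^sub>v b) \<in> carrier_vec m"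
    and "M *\<^sub>v (pinv M *\<^sub>v (transpose_mat W *\<^sub>v b)) = transpose_mat W *\<^sub>v b"
proof -
  have Mc: "M \<in> carrier_mat m m" unfolding M_def using W A by simp
  have Msym: "transpose_mat M = M" unfolding M_def by (rule transpose_gram_mat[OF W A sym])
  define X where "X = pinv M"
  have P: "is_pinv M X" and MX: "M * X = X * M" unfolding X_def using pinv_symmetric[OF Mc Msym] by auto
  have Xc: "X \<in> carrier_mat m m" using P Mc unfolding is_pinv_def by auto
  have MXM: "M * X * M = M" using P unfolding is_pinv_def by auto
  define c where "c = transpose_mat W *\<^sub>v b"
  have cc: "c \<in> carrier_vec m" unfolding c_def using W b by simp
  define qs where "qs = X *\<^sub>v c"
  show qsc: "pinv M *\<^sub>v (transpose_mat W *\<^sub>v b) \<in> carrier_vec m"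
    using Xc cc unfolding X_def c_def by simp
  have "M *\<^sub>v (M *\<^sub>v qs) = (M * X * M) *\<^sub>v c"
  proof -
    have "M *\<^sub>v (M *\<^sub>v qs) = M *\<^sub>v ((M * X) *\<^sub>v c)" unfolding qs_def using Mc Xc cc by simp
    also have "\<dots> = M *\<^sub>v ((X * M) *\<^sub>v c)" using MX by simp
    also have "\<dots> = (M * (X * M)) *\<^sub>v c"
      using assoc_mult_mat_vec[OF Mc mult_carrier_mat[OF Xc Mc] cc] Xc Mc cc by simp
    finally show ?thesis using assoc_mult_mat[OF Mc Xc Mc] by simp
  qed
  define z where "z = c - M *\<^sub>v qs"
  have qc: "qs \<in> carrier_vec m" unfolding qs_def using Xc cc by simp
  have zc: "z \<in> carrier_vec m" unfolding z_def using cc Mc qc by simp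
  have Mz: "M *\<^sub>v z = 0\<^sub>v m"
    unfolding z_def using Mc cc qc \<open>M *\<^sub>v (M *\<^sub>v qs) = (M * X * M) *\<^sub>v c\<close> MXM
    by (simp add: mult_minus_distrib_mat_vec[of _ m m])
  have "(W *\<^sub>v z) \<bullet> (A *\<^sub>v (W *\<^sub>v z)) = 0"
    using scalar_prod_gram_mult_vec[OF W A zc zc] Mz zc unfolding M_def by simp
  hence Wz: "W *\<^sub>v z = 0\<^sub>v N" using pd W zc by force
  have "z \<bullet> z = z \<bullet> c - z \<bullet> (M *\<^sub>v qs)"
    unfolding z_def using zc cc Mc qc by (simp add: scalar_prod_minus_distrib[of _ m])
  also have "z \<bullet> c = (W *\<^sub>v z) \<bullet> b" unfolding c_def by (rule scalar_prod_transpose_mult_vec[OF W zc b])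
  also have "z \<bullet> (M *\<^sub>v qs) = qs \<bullet> (M *\<^sub>v z)" by (rule scalar_prod_sym_mat[OF Mc Msym zc qc])
  finally have "z \<bullet> z = 0" using Wz Mz b qc by simp
  hence z0: "z = 0\<^sub>v m" using scalar_prod_self_eq_0_iff[OF zc] by simp
  have "M *\<^sub>v qs = c"
  proof (rule eq_vecI)
    fix i assume "i < dim_vec c"
    hence i: "i < m" using cc by simp
    have "z $ i = 0" using z0 i by simp
    thus "(M *\<^sub>v qs) $ i = c $ i" unfolding z_def using i cc Mc by simp
  qed (use cc Mc in simp)
  thus "M *\<^sub>v (pinv M *\<^sub>v (transpose_mat W *\<^sub>v b)) = transpose_mat W *\<^sub>v b"
    unfolding qs_def X_def c_def .
qed

text \<open>The exact energy decrease of one block step: \<open>q\<^sub>s\<close> solves the normal equation, so the cross term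
  of \<open>f(W q) = f(W q\<^sub>s + W (q - q\<^sub>s))\<close> vanishes.\<close>
lemma energy_normal_equation_split:
  fixes W A :: "real mat" and b q qs :: "real vec"
  assumes W: "W \<in> carrier_mat N m" and A: "A \<in> carrier_mat N N" and sym: "transpose_mat A = A"
    and b: "b \<in> carrier_vec N" and q: "q \<in> carrier_vec m" and qs: "qs \<in> carrier_vec m"
    and normal: "(transpose_mat W * A * W) *\<^sub>v qs = transpose_mat W *\<^sub>v b"
  shows "energy A b (W *\<^sub>v q)
      = energy A b (W *\<^sub>v qs) + ((W *\<^sub>v (q - qs)) \<bullet> (A *\<^sub>v (W *\<^sub>v (q - qs)))) / 2"
proof -
  define d where "d = q - qs"
  have dc: "d \<in> carrier_vec m" unfolding d_def using q qs by simp
  define u where "u = W *\<^sub>v qs"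
  define w where "w = W *\<^sub>v d"
  have uc: "u \<in> carrier_vec N" and wc: "w \<in> carrier_vec N" unfolding u_def w_def using W qs dc by auto
  have Wq: "W *\<^sub>v q = u + w"
  proof -
    have "q = qs + d" unfolding d_def using q qs by (intro eq_vecI) auto
    thus ?thesis unfolding u_def w_def using W qs dc by (simp add: mult_add_distrib_mat_vec[of _ N m])
  qed
  have cross: "w \<bullet> (A *\<^sub>v u) = b \<bullet> w"
  proof -
    have "w \<bullet> (A *\<^sub>v u) = d \<bullet> ((transpose_mat W * A * W) *\<^sub>v qs)"
      unfolding u_def w_def by (rule scalar_prod_gram_mult_vec[OF W A dc qs, symmetric])
    also have "\<dots> = w \<bullet> b"
      unfolding normal w_def by (rule scalar_prod_transpose_mult_vec[OF W dc b])
    finally show ?thesis using comm_scalar_prod[OF wc b] by simp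
  qed
  have "(u + w) \<bullet> (A *\<^sub>v (u + w)) = u \<bullet> (A *\<^sub>v u) + u \<bullet> (A *\<^sub>v w) + w \<bullet> (A *\<^sub>v u) + w \<bullet> (A *\<^sub>v w)"
    using uc wc A by (simp add: mult_add_distrib_mat_vec[of _ N N] add_scalar_prod_distrib[of _ N]
        scalar_prod_add_distrib[of _ N])
  moreover have "u \<bullet> (A *\<^sub>v w) = w \<bullet> (A *\<^sub>v u)" by (rule scalar_prod_sym_mat[OF A sym uc wc])
  moreover have "b \<bullet> (u + w) = b \<bullet> u + b \<bullet> w" using b uc wc by (simp add: scalar_prod_add_distrib[of _ N])
  ultimately show ?thesis
    unfolding energy_def Wq using cross by (simp add: u_def[symmetric] w_def[symmetric] d_def[symmetric] field_simps)
qed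

section \<open>Multilinear formats\<close>

lemma Wmat_carrier: "Wmat N n U \<mu> p \<in> carrier_mat N (n \<mu>)"
  unfolding Wmat_def by simp

lemma multilinear_format_carrier:
  "multilinear_format L n N U \<Longrightarrow> \<forall>\<mu><L. p \<mu> \<in> carrier_vec (n \<mu>) \<Longrightarrow> U p \<in> carrier_vec N"
  unfolding multilinear_format_def by blast

lemma multilinear_format_cong:
  "multilinear_format L n N U \<Longrightarrow> (\<And>\<mu>. \<mu> < L \<Longrightarrow> p \<mu> = q \<mu>) \<Longrightarrow> U p = U q"
  unfolding multilinear_format_def by blast

lemma multilinear_format_linear:
  assumes "multilinear_format L n N U" "\<mu> < L" "\<forall>\<nu><L. p \<nu> \<in> carrier_vec (n \<nu>)"
    and "x \<in> carrier_vec (n \<mu>)" "y \<in> carrier_vec (n \<mu>)"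
  shows "U (p(\<mu> := a \<cdot>\<^sub>v x + c \<cdot>\<^sub>v y)) = a \<cdot>\<^sub>v U (p(\<mu> := x)) + c \<cdot>\<^sub>v U (p(\<mu> := y))"
  using assms unfolding multilinear_format_def by blast

lemma multilinear_format_eq_Wmat:
  assumes ml: "multilinear_format L n N U" and mu: "\<mu> < L"
    and p: "\<forall>\<nu><L. p \<nu> \<in> carrier_vec (n \<nu>)" and x: "x \<in> carrier_vec (n \<mu>)"
  shows "U (p(\<mu> := x)) = Wmat N n U \<mu> p *\<^sub>v x"
proof -
  have Uc: "U (p(\<mu> := y)) \<in> carrier_vec N" if "y \<in> carrier_vec (n \<mu>)" for y
    using p that by (intro multilinear_format_carrier[OF ml]) simp
  note lin = multilinear_format_linear[OF ml mu p]
  define trunc where "trunc j = vec (n \<mu>) (\<lambda>i. if i < j then x $ i else 0)" for j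
  have trunc_carrier: "trunc j \<in> carrier_vec (n \<mu>)" for j unfolding trunc_def by simp
  have expand: "\<forall>r<N. U (p(\<mu> := trunc j)) $ r = (\<Sum>i<j. x $ i * U (p(\<mu> := unit_vec (n \<mu>) i)) $ r)"
    if "j \<le> n \<mu>" for j
    using that
  proof (induct j)
    case 0
    have "trunc 0 = 0 \<cdot>\<^sub>v 0\<^sub>v (n \<mu>) + 0 \<cdot>\<^sub>v 0\<^sub>v (n \<mu>)" unfolding trunc_def by (intro eq_vecI) auto
    hence "U (p(\<mu> := trunc 0)) = 0 \<cdot>\<^sub>v U (p(\<mu> := 0\<^sub>v (n \<mu>))) + 0 \<cdot>\<^sub>v U (p(\<mu> := 0\<^sub>v (n \<mu>)))"
      using lin[of "0\<^sub>v (n \<mu>)" "0\<^sub>v (n \<mu>)" 0 0] by simp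
    thus ?case using Uc[of "0\<^sub>v (n \<mu>)"] by (simp add: fun_upd_def)
  next
    case (Suc j)
    have j: "j < n \<mu>" using Suc.prems by simp
    have "trunc (Suc j) = 1 \<cdot>\<^sub>v trunc j + (x $ j) \<cdot>\<^sub>v unit_vec (n \<mu>) j"
      unfolding trunc_def using j by (intro eq_vecI) (auto simp: less_Suc_eq)
    hence step: "U (p(\<mu> := trunc (Suc j)))
        = 1 \<cdot>\<^sub>v U (p(\<mu> := trunc j)) + (x $ j) \<cdot>\<^sub>v U (p(\<mu> := unit_vec (n \<mu>) j))"
      using lin[OF trunc_carrier[of j], of "unit_vec (n \<mu>) j" 1 "x $ j"] by simp
    show ?case
    proof (intro allI impI)
      fix r assume r: "r < N"
      have "U (p(\<mu> := trunc (Suc j))) $ r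
          = U (p(\<mu> := trunc j)) $ r + x $ j * U (p(\<mu> := unit_vec (n \<mu>) j)) $ r"
        unfolding step using r Uc[OF trunc_carrier[of j]] Uc[of "unit_vec (n \<mu>) j"] by simp
      thus "U (p(\<mu> := trunc (Suc j))) $ r = (\<Sum>i<Suc j. x $ i * U (p(\<mu> := unit_vec (n \<mu>) i)) $ r)"
        using Suc.hyps j r by (simp add: fun_upd_def)
    qed
  qed
  have "trunc (n \<mu>) = x" unfolding trunc_def using x by (intro eq_vecI) auto
  show ?thesis
  proof (rule eq_vecI)
    fix r assume "r < dim_vec (Wmat N n U \<mu> p *\<^sub>v x)"
    hence r: "r < N" unfolding Wmat_def by simp
    have "U (p(\<mu> := x)) $ r = (\<Sum>i<n \<mu>. x $ i * U (p(\<mu> := unit_vec (n \<mu>) i)) $ r)"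
      using expand[of "n \<mu>"] \<open>trunc (n \<mu>) = x\<close> r by simp
    also have "\<dots> = (Wmat N n U \<mu> p *\<^sub>v x) $ r"
      unfolding Wmat_def using r x by (simp add: scalar_prod_def atLeast0LessThan mult.commute)
    finally show "U (p(\<mu> := x)) $ r = (Wmat N n U \<mu> p *\<^sub>v x) $ r" .
  qed (use Uc[OF x] in \<open>simp add: Wmat_def\<close>)
qed

section \<open>Sequences with vanishing increments\<close>

text \<open>A discrete intermediate value argument: the first far index after a near one overshoots the
  radius \<open>\<eta>\<close> by less than one step.\<close>
lemma frequently_in_annulus:
  assumes vc: "\<And>k. v k \<in> carrier_vec N" and z: "z \<in> carrier_vec N"
    and near: "\<And>K. \<exists>k\<ge>K. vnorm (v k - z) < \<eta>"
    and far: "\<And>K. \<exists>k\<ge>K. \<eta> \<le> vnorm (v k - z)"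
    and steps: "\<And>k. k \<ge> K0 \<Longrightarrow> vnorm (v (Suc k) - v k) < \<eta>"
  shows "\<exists>j\<ge>K. \<eta> \<le> vnorm (v j - z) \<and> vnorm (v j - z) \<le> 2 * \<eta>"
proof -
  obtain k0 where k0: "k0 \<ge> max K K0" "vnorm (v k0 - z) < \<eta>" using near by blast
  obtain k2 where k2: "k2 \<ge> k0" "\<eta> \<le> vnorm (v k2 - z)" using far by blast
  define P where "P j \<longleftrightarrow> k0 \<le> j \<and> \<eta> \<le> vnorm (v j - z)" for j
  define j where "j = (LEAST j. P j)"
  have Pj: "P j" unfolding j_def by (rule LeastI[of P k2]) (use k2 in \<open>simp add: P_def\<close>)
  have "j \<noteq> k0" using Pj k0(2) unfolding P_def by auto
  then obtain i where ji: "j = Suc i" and ik: "k0 \<le> i" using Pj unfolding P_def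
    by (metis le_eq_less_or_eq less_imp_Suc_add add_Suc_right le_add1)
  have "\<not> P i" unfolding j_def by (rule not_less_Least) (use ji j_def in simp)
  hence "vnorm (v i - z) < \<eta>" using ik unfolding P_def by auto
  moreover have "vnorm (v j - v i) < \<eta>" using steps[of i] ik k0(1) ji by simp
  ultimately have "vnorm (v j - z) \<le> 2 * \<eta>"
    using vnorm_diff_triangle[OF vc vc z, of j i] by simp
  thus ?thesis using Pj k0(1) unfolding P_def by (intro exI[of _ j]) auto
qed

lemma acc_point_in_annulus:
  assumes vc: "\<And>k. v k \<in> carrier_vec N" and z: "z \<in> carrier_vec N"
    and freq: "\<And>K. \<exists>j\<ge>K. \<eta> \<le> vnorm (v j - z) \<and> vnorm (v j - z) \<le> \<rho>"
  obtains w where "w \<in> acc_points N v" "\<eta> \<le> vnorm (w - z)" "vnorm (w - z) \<le> \<rho>"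
proof -
  define S where "S = {j. \<eta> \<le> vnorm (v j - z) \<and> vnorm (v j - z) \<le> \<rho>}"
  have "infinite S" unfolding S_def infinite_nat_iff_unbounded_le using freq by blast
  then obtain r :: "nat \<Rightarrow> nat" where r: "strict_mono r" "\<And>k. r k \<in> S"
    using infinite_enumerate[of S] by auto
  have bounded: "vnorm ((v \<circ> r) k) \<le> vnorm z + \<rho>" for k
  proof -
    have "v (r k) = (v (r k) - z) + z" using vc[of "r k"] z by (intro eq_vecI) auto
    hence "vnorm (v (r k)) \<le> vnorm (v (r k) - z) + vnorm z"
      using vnorm_add_le[of "v (r k) - z" N z] vc[of "r k"] z by simp
    thus ?thesis using r(2)[of k] unfolding S_def by simp
  qed
  have vrc: "(v \<circ> r) k \<in> carrier_vec N" for k using vc by simp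
  obtain r' w where r': "strict_mono r'" and wc: "w \<in> carrier_vec N"
    and t: "vec_tendsto ((v \<circ> r) \<circ> r') w"
    using bounded_vec_seq_convergent_subseq[where X="v \<circ> r", OF vrc bounded] by blast
  have "w \<in> acc_points N v" unfolding acc_points_def
    using wc t strict_mono_o[OF r(1) r'] by (auto simp: o_assoc)
  moreover have lim: "(\<lambda>k. vnorm (v (r (r' k)) - z)) \<longlonglongrightarrow> vnorm (w - z)"
    using vec_tendsto_vnorm_diff[OF _ wc z t] vc by simp
  moreover have "\<eta> \<le> vnorm (w - z)"
    by (rule LIMSEQ_le_const[OF lim]) (use r(2) in \<open>auto simp: S_def\<close>)
  moreover have "vnorm (w - z) \<le> \<rho>"
    by (rule LIMSEQ_le_const2[OF lim]) (use r(2) in \<open>auto simp: S_def\<close>)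
  ultimately show ?thesis using that by blast
qed

lemma isolated_acc_point_tendsto:
  fixes v :: "nat \<Rightarrow> real vec"
  assumes vc: "\<And>k. v k \<in> carrier_vec N" and acc: "vbar \<in> acc_points N v"
    and iso: "\<exists>\<epsilon>>0. \<forall>w \<in> acc_points N v. w \<noteq> vbar \<longrightarrow> vnorm (w - vbar) \<ge> \<epsilon>"
    and steps: "(\<lambda>k. vnorm (v (Suc k) - v k)) \<longlonglongrightarrow> 0"
  shows "vec_tendsto v vbar"
proof (rule ccontr)
  assume "\<not> vec_tendsto v vbar"
  then obtain \<eta>0 where "\<eta>0 > 0" and far: "\<And>K. \<exists>k\<ge>K. \<eta>0 \<le> vnorm (v k - vbar)"
    unfolding vec_tendsto_def LIMSEQ_iff using vnorm_nonneg by (auto simp: not_less)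
  obtain e where "e > 0" and iso_e: "\<And>w. w \<in> acc_points N v \<Longrightarrow> w \<noteq> vbar \<Longrightarrow> e \<le> vnorm (w - vbar)"
    using iso by blast
  define \<eta> where "\<eta> = min \<eta>0 (e / 3)"
  have \<eta>: "\<eta> > 0" "\<eta> \<le> \<eta>0" "3 * \<eta> \<le> e" unfolding \<eta>_def using \<open>\<eta>0 > 0\<close> \<open>e > 0\<close> by auto
  have vb: "vbar \<in> carrier_vec N" using acc unfolding acc_points_def by auto
  obtain r0 where r0: "strict_mono r0" "vec_tendsto (v \<circ> r0) vbar"
    using acc unfolding acc_points_def by auto
  have near: "\<exists>k\<ge>K. vnorm (v k - vbar) < \<eta>" for K
  proof -
    obtain J where "\<And>j. j \<ge> J \<Longrightarrow> vnorm (v (r0 j) - vbar) < \<eta>"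
      using r0(2) \<eta>(1) unfolding vec_tendsto_def LIMSEQ_iff using vnorm_nonneg by fastforce
    thus ?thesis using seq_suble[OF r0(1), of "max K J"] by (intro exI[of _ "r0 (max K J)"]) auto
  qed
  obtain K0 where "\<And>k. k \<ge> K0 \<Longrightarrow> vnorm (v (Suc k) - v k) < \<eta>"
    using steps \<eta>(1) unfolding LIMSEQ_iff using vnorm_nonneg by fastforce
  with vc vb near have "\<exists>j\<ge>K. \<eta> \<le> vnorm (v j - vbar) \<and> vnorm (v j - vbar) \<le> 2 * \<eta>" for K
    using far order_trans[OF \<eta>(2)] by (intro frequently_in_annulus) blast+
  then obtain w where "w \<in> acc_points N v" "\<eta> \<le> vnorm (w - vbar)" "vnorm (w - vbar) \<le> 2 * \<eta>"
    using acc_point_in_annulus[where v=v, OF vc vb] by blast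
  moreover have "w \<noteq> vbar" using \<open>\<eta> \<le> vnorm (w - vbar)\<close> \<eta>(1) vnorm_diff_self[OF vb] by auto
  ultimately show False using iso_e \<eta> by fastforce
qed

section \<open>Alternating least squares\<close>

locale als_iteration =
  fixes L N :: nat and n :: "nat \<Rightarrow> nat" and U :: "(nat \<Rightarrow> real vec) \<Rightarrow> real vec"
    and A :: "real mat" and b :: "real vec" and pp :: "nat \<Rightarrow> nat \<Rightarrow> real vec"
  assumes A_carrier: "A \<in> carrier_mat N N"
    and A_sym: "transpose_mat A = A"
    and A_pd: "\<forall>x \<in> carrier_vec N. x \<noteq> 0\<^sub>v N \<longrightarrow> x \<bullet> (A *\<^sub>v x) > 0"
    and b_carrier: "b \<in> carrier_vec N"
    and U_ml: "multilinear_format L n N U"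
    and init: "\<forall>\<mu><L. pp 0 \<mu> \<in> carrier_vec (n \<mu>)"
    and ALS: "\<forall>k. \<forall>\<mu><L.
       (let W = Wmat N n U \<mu> (\<lambda>\<nu>. if \<nu> < \<mu> then pp (Suc k) \<nu> else pp k \<nu>)
        in pp (Suc k) \<mu> = pinv (transpose_mat W * A * W) *\<^sub>v (transpose_mat W *\<^sub>v b))"
begin

text \<open>The parameter of sweep \<open>k\<close> just before its block \<open>\<mu>\<close> is updated.\<close>
definition sweep_param :: "nat \<Rightarrow> nat \<Rightarrow> nat \<Rightarrow> real vec" where
  "sweep_param k \<mu> = (\<lambda>\<nu>. if \<nu> < \<mu> then pp (Suc k) \<nu> else pp k \<nu>)"

definition block_change :: "nat \<Rightarrow> nat \<Rightarrow> real vec" where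
  "block_change k \<mu> = U (sweep_param k \<mu>) - U (sweep_param k (Suc \<mu>))"

definition sweep_decrease :: "nat \<Rightarrow> real" where
  "sweep_decrease k = (\<Sum>\<mu><L. block_change k \<mu> \<bullet> (A *\<^sub>v block_change k \<mu>))"

lemma als_update:
  fixes k \<mu> :: nat
  assumes "\<mu> < L"
  defines "W \<equiv> Wmat N n U \<mu> (sweep_param k \<mu>)"
  shows "pp (Suc k) \<mu> = pinv (transpose_mat W * A * W) *\<^sub>v (transpose_mat W *\<^sub>v b)"
  using ALS[rule_format, of \<mu> k] assms unfolding W_def sweep_param_def Let_def by simp

lemma param_carrier: "\<mu> < L \<Longrightarrow> pp k \<mu> \<in> carrier_vec (n \<mu>)"
proof (cases k)
  case (Suc k')
  assume "\<mu> < L"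
  show ?thesis unfolding Suc als_update[OF \<open>\<mu> < L\<close>]
    by (rule pinv_solves_normal_equation(1)[OF Wmat_carrier A_carrier A_sym A_pd b_carrier])
qed (use init in simp)

lemma sweep_param_carrier: "\<forall>\<nu><L. sweep_param k \<mu> \<nu> \<in> carrier_vec (n \<nu>)"
  unfolding sweep_param_def using param_carrier by simp

lemma U_sweep_param_carrier: "U (sweep_param k \<mu>) \<in> carrier_vec N"
  by (rule multilinear_format_carrier[OF U_ml sweep_param_carrier])

lemma U_sweep_param_0: "U (sweep_param k 0) = U (pp k)"
  unfolding sweep_param_def by simp

lemma U_sweep_param_L: "U (sweep_param k L) = U (pp (Suc k))"
  by (rule multilinear_format_cong[OF U_ml]) (simp add: sweep_param_def)

lemma U_pp_carrier: "U (pp k) \<in> carrier_vec N"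
  using U_sweep_param_carrier U_sweep_param_0 by metis

lemma block_change_carrier: "block_change k \<mu> \<in> carrier_vec N"
  unfolding block_change_def using U_sweep_param_carrier by simp

lemma block_form_nonneg: "0 \<le> block_change k \<mu> \<bullet> (A *\<^sub>v block_change k \<mu>)"
proof (cases "block_change k \<mu> = 0\<^sub>v N")
  case False
  thus ?thesis using A_pd block_change_carrier[of k \<mu>] by (simp add: less_imp_le)
qed (use A_carrier in simp)

lemma energy_block_update:
  assumes mu: "\<mu> < L"
  shows "energy A b (U (sweep_param k \<mu>))
    = energy A b (U (sweep_param k (Suc \<mu>))) + block_change k \<mu> \<bullet> (A *\<^sub>v block_change k \<mu>) / 2"
proof -
  define W where "W = Wmat N n U \<mu> (sweep_param k \<mu>)"
  have W: "W \<in> carrier_mat N (n \<mu>)" unfolding W_def by (rule Wmat_carrier)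
  have old: "sweep_param k \<mu> = (sweep_param k \<mu>)(\<mu> := pp k \<mu>)"
    by (rule ext) (simp add: sweep_param_def)
  have new: "sweep_param k (Suc \<mu>) = (sweep_param k \<mu>)(\<mu> := pp (Suc k) \<mu>)"
    by (rule ext) (simp add: sweep_param_def less_Suc_eq)
  have U_old: "U (sweep_param k \<mu>) = W *\<^sub>v pp k \<mu>"
    unfolding W_def by (subst old, rule multilinear_format_eq_Wmat[OF U_ml mu sweep_param_carrier param_carrier[OF mu]])
  have U_new: "U (sweep_param k (Suc \<mu>)) = W *\<^sub>v pp (Suc k) \<mu>"
    unfolding W_def by (subst new, rule multilinear_format_eq_Wmat[OF U_ml mu sweep_param_carrier param_carrier[OF mu]])
  have "block_change k \<mu> = W *\<^sub>v (pp k \<mu> - pp (Suc k) \<mu>)"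
    unfolding block_change_def U_old U_new using W param_carrier[OF mu]
    by (simp add: mult_minus_distrib_mat_vec[of _ N "n \<mu>"])
  moreover have normal: "(transpose_mat W * A * W) *\<^sub>v pp (Suc k) \<mu> = transpose_mat W *\<^sub>v b"
    unfolding als_update[OF mu] W_def[symmetric]
    by (rule pinv_solves_normal_equation(2)[OF W A_carrier A_sym A_pd b_carrier])
  ultimately show ?thesis unfolding U_old U_new
    using energy_normal_equation_split[OF W A_carrier A_sym b_carrier
        param_carrier[OF mu, of k] param_carrier[OF mu, of "Suc k"] normal]
    by simp
qed

lemma energy_sweep: "energy A b (U (pp k)) = energy A b (U (pp (Suc k))) + sweep_decrease k / 2"
proof -
  have "energy A b (U (sweep_param k 0))
      = energy A b (U (sweep_param k m)) + (\<Sum>\<mu><m. block_change k \<mu> \<bullet> (A *\<^sub>v block_change k \<mu>)) / 2"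
    if "m \<le> L" for m
    using that
  proof (induct m)
    case (Suc m)
    thus ?case using energy_block_update[of m k] by (simp add: add_divide_distrib)
  qed simp
  from this[of L] show ?thesis
    unfolding sweep_decrease_def U_sweep_param_0 U_sweep_param_L by simp
qed

lemma sweep_decrease_tendsto_0: "sweep_decrease \<longlonglongrightarrow> 0"
proof -
  obtain c where c: "c > 0" and coercive: "\<forall>x \<in> carrier_vec N. c * (x \<bullet> x) \<le> x \<bullet> (A *\<^sub>v x)"
    using pos_def_coercive[OF A_carrier A_pd] by blast
  have nonneg: "0 \<le> sweep_decrease k" for k
    unfolding sweep_decrease_def using block_form_nonneg by (rule sum_nonneg)
  have telescope: "energy A b (U (pp 0)) = energy A b (U (pp K)) + (\<Sum>k<K. sweep_decrease k) / 2" for K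
  proof (induct K)
    case (Suc K)
    thus ?case using energy_sweep[of K] by (simp add: add_divide_distrib)
  qed simp
  have "(\<Sum>k<K. sweep_decrease k) \<le> 2 * (energy A b (U (pp 0)) + (b \<bullet> b) / (2 * c))" for K
    using telescope[of K] energy_lower_bound[OF c coercive b_carrier U_pp_carrier[of K]] by simp
  hence "summable sweep_decrease" by (rule summableI_nonneg_bounded[OF nonneg])
  thus ?thesis by (rule summable_LIMSEQ_zero)
qed

lemma successive_diff_tendsto_0: "(\<lambda>k. vnorm (U (pp (Suc k)) - U (pp k))) \<longlonglongrightarrow> 0"
proof -
  obtain c where c: "c > 0" and coercive: "\<forall>x \<in> carrier_vec N. c * (x \<bullet> x) \<le> x \<bullet> (A *\<^sub>v x)"
    using pos_def_coercive[OF A_carrier A_pd] by blast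
  have block_bound: "vnorm (block_change k \<mu>) \<le> sqrt (sweep_decrease k / c)" if "\<mu> < L" for k \<mu>
  proof -
    have "block_change k \<mu> \<bullet> block_change k \<mu> \<le> block_change k \<mu> \<bullet> (A *\<^sub>v block_change k \<mu>) / c"
      using coercive block_change_carrier c by (simp add: field_simps)
    also have "\<dots> \<le> sweep_decrease k / c"
      unfolding sweep_decrease_def using that block_form_nonneg c
      by (intro divide_right_mono member_le_sum) auto
    finally show ?thesis unfolding vnorm_def by (rule real_sqrt_le_mono)
  qed
  have chain: "vnorm (U (sweep_param k 0) - U (sweep_param k m)) \<le> (\<Sum>\<mu><m. vnorm (block_change k \<mu>))" for k m
  proof (induct m)
    case (Suc m)
    thus ?case
      using vnorm_diff_triangle[of "U (sweep_param k 0)" N "U (sweep_param k m)" "U (sweep_param k (Suc m))"]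
        U_sweep_param_carrier
      unfolding block_change_def by simp
  qed (simp add: vnorm_diff_self[OF U_sweep_param_carrier])
  have bound: "\<bar>vnorm (U (pp (Suc k)) - U (pp k))\<bar> \<le> real L * sqrt (sweep_decrease k / c)" for k
  proof -
    have "vnorm (U (pp (Suc k)) - U (pp k)) \<le> (\<Sum>\<mu><L. vnorm (block_change k \<mu>))"
      using chain[of k L] vnorm_minus_commute[OF U_pp_carrier U_pp_carrier, of "Suc k" k]
      unfolding U_sweep_param_0 U_sweep_param_L by simp
    also have "\<dots> \<le> real L * sqrt (sweep_decrease k / c)"
      using sum_mono[of "{..<L}" "\<lambda>\<mu>. vnorm (block_change k \<mu>)" "\<lambda>_. sqrt (sweep_decrease k / c)"]
        block_bound by simp
    finally show ?thesis using vnorm_nonneg by simp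
  qed
  have "(\<lambda>k. real L * sqrt (sweep_decrease k / c)) \<longlonglongrightarrow> real L * sqrt (0 / c)"
    using c by (intro tendsto_intros sweep_decrease_tendsto_0) simp
  hence "(\<lambda>k. real L * sqrt (sweep_decrease k / c)) \<longlonglongrightarrow> 0" by simp
  thus ?thesis by (rule LIMSEQ_0_if_abs_le[OF bound])
qed

end

theorem mainTheorem2:
  fixes d L N :: nat and m n :: "nat \<Rightarrow> nat"
    and A :: "real mat" and b :: "real vec"
    and U :: "(nat \<Rightarrow> real vec) \<Rightarrow> real vec"
    and pp :: "nat \<Rightarrow> nat \<Rightarrow> real vec"
    and vbar :: "real vec"
  assumes d_pos: "d \<ge> 1"
    and m_pos: "\<forall>\<nu><d. m \<nu> > 0"
    and N_def: "N = (\<Prod>\<nu><d. m \<nu>)"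
    and A_carrier: "A \<in> carrier_mat N N"
    and A_sym: "transpose_mat A = A"
    and A_pd: "\<forall>x \<in> carrier_vec N. x \<noteq> 0\<^sub>v N \<longrightarrow> x \<bullet> (A *\<^sub>v x) > 0"
    and b_carrier: "b \<in> carrier_vec N"
    and b_nz: "b \<noteq> 0\<^sub>v N"
    and L_ge: "L \<ge> d"
    and U_ml: "multilinear_format L n N U"
    and init: "\<forall>\<mu><L. pp 0 \<mu> \<in> carrier_vec (n \<mu>)"
    and ALS: "\<forall>k. \<forall>\<mu><L.
       (let W = Wmat N n U \<mu> (\<lambda>\<nu>. if \<nu> < \<mu> then pp (Suc k) \<nu> else pp k \<nu>)
        in pp (Suc k) \<mu> = pinv (transpose_mat W * A * W) *\<^sub>v (transpose_mat W *\<^sub>v b))"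
    and bounded: "\<exists>B. \<forall>k. pnorm L (pp k) \<le> B"
    and acc: "vbar \<in> acc_points N (\<lambda>k. U (pp k))"
    and isolated: "\<exists>\<epsilon>>0. \<forall>w \<in> acc_points N (\<lambda>k. U (pp k)).
                      w \<noteq> vbar \<longrightarrow> vnorm (w - vbar) \<ge> \<epsilon>"
  shows "vec_tendsto (\<lambda>k. U (pp k)) vbar"
proof -
  interpret als: als_iteration L N n U A b pp
    by (rule als_iteration.intro[OF A_carrier A_sym A_pd b_carrier U_ml init ALS])
  show ?thesis
    by (rule isolated_acc_point_tendsto[where v="\<lambda>k. U (pp k)",
          OF als.U_pp_carrier acc isolated als.successive_diff_tendsto_0])
qed

end
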